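(* Let $(\mathfrak{g},[\cdot,\cdot]_{\mathfrak{g}},\phi_{\mathfrak{g}})$ be a finite-dimensional weakly involutive Hom-Lie algebra and let $r\in\mathfrak g\otimes\mathfrak g$ be skew-symmetric with $r^\sharp$ invertible. Define $B(x,y)=\langle(r^\sharp)^{-1}(x),y\rangle$. Then [$\phi_{\mathfrak g}r^\sharp=r^\sharp\phi_{\mathfrak g}^*$ and $r$ is a solution of the classical Hom-Yang-Baxter equation $[r,r]_{\mathfrak g}=0$] if and only if for all $x,y,z\in\mathfrak g$: $B(\phi_{\mathfrak g}(x),[y,z]_{\mathfrak g})+B(\phi_{\mathfrak g}(y),[z,x]_{\mathfrak g})+B(\phi_{\mathfrak g}(z),[x,y]_{\mathfrak g})=0$ and $B(\phi_{\mathfrak g}(x),y)=B(x,\phi_{\mathfrak g}(y))$.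
   Context: A Hom-Lie algebra $(\mathfrak{g},[\cdot,\cdot]_{\mathfrak{g}},\phi_{\mathfrak{g}})$: skew-symmetric bilinear bracket and linear map with $\phi_{\mathfrak g}[x,y]=[\phi_{\mathfrak g}x,\phi_{\mathfrak g}y]$ and $[\phi_{\mathfrak g}(x),[y,z]]+[\phi_{\mathfrak g}(y),[z,x]]+[\phi_{\mathfrak g}(z),[x,y]]=0$; weakly involutive if $[\phi_{\mathfrak g}^2(x),y]=[x,y]$. For $r\in\mathfrak g\otimes\mathfrak g$, $r^\sharp:\mathfrak g^*\to\mathfrak g$ is defined by $\langle r^\sharp(a),b\rangle=\langle r,a\otimes b\rangle$. For $r=\sum_ix_i\otimes y_i$, $[r,r]_{\mathfrak g}=\sum_{i,j}\big([x_i,x_j]_{\mathfrak g}\otimes\phi_{\mathfrak g}(y_i)\otimes\phi_{\mathfrak g}(y_j)+\phi_{\mathfrak g}(x_i)\otimes[y_i,x_j]_{\mathfrak g}\otimes\phi_{\mathfrak g}(y_j)+\phi_{\mathfrak g}(x_i)\otimes\phi_{\mathfrak g}(x_j)\otimes[y_i,y_j]_{\mathfrak g}\big)$. *)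

theory Defs
  imports "HOL-Analysis.Analysis"
begin

text \<open>The finite-dimensional vector space g over a field 'k is modelled as 'k^'n
 for a finite index type 'n (standard basis e_i = axis i 1). The dual space g* is
 also modelled as 'k^'n via the dual basis, with the natural pairing below.
 A 2-tensor r in g (x) g is given by its coefficient matrix R: r = sum R i j e_i (x) e_j,
 and a 3-tensor by its coefficient function.\<close>

definition klinear :: "('k::field^'n \<Rightarrow> 'k^'m) \<Rightarrow> bool" where
  "klinear f \<longleftrightarrow> (\<forall>x y. f (x + y) = f x + f y) \<and> (\<forall>c x. f (c *s x) = c *s f x)"

definition kbilinear :: "('k::field^'n \<Rightarrow> 'k^'n \<Rightarrow> 'k^'n) \<Rightarrow> bool" where
  "kbilinear br \<longleftrightarrow> (\<forall>x. klinear (br x)) \<and> (\<forall>y. klinear (\<lambda>x. br x y))"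

definition hom_lie_algebra ::
  "('k::field^'n::finite \<Rightarrow> 'k^'n \<Rightarrow> 'k^'n) \<Rightarrow> ('k^'n \<Rightarrow> 'k^'n) \<Rightarrow> bool" where
  "hom_lie_algebra br \<phi> \<longleftrightarrow>
     kbilinear br \<and> klinear \<phi> \<and>
     (\<forall>x y. br x y = - br y x) \<and>
     (\<forall>x y. \<phi> (br x y) = br (\<phi> x) (\<phi> y)) \<and>
     (\<forall>x y z. br (\<phi> x) (br y z) + br (\<phi> y) (br z x) + br (\<phi> z) (br x y) = 0)"

definition weakly_involutive ::
  "('k::field^'n::finite \<Rightarrow> 'k^'n \<Rightarrow> 'k^'n) \<Rightarrow> ('k^'n \<Rightarrow> 'k^'n) \<Rightarrow> bool" where
  "weakly_involutive br \<phi> \<longleftrightarrow> (\<forall>x y. br (\<phi> (\<phi> x)) y = br x y)"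

definition pairing :: "'k::field^'n::finite \<Rightarrow> 'k^'n \<Rightarrow> 'k" where
  "pairing a x = (\<Sum>i\<in>UNIV. a $ i * x $ i)"

text \<open>Dual map phi^*: pairing (phi^* a) x = pairing a (phi x).\<close>
definition dual_map :: "('k::field^'n::finite \<Rightarrow> 'k^'n) \<Rightarrow> 'k^'n \<Rightarrow> 'k^'n" where
  "dual_map \<phi> a = (\<chi> i. pairing a (\<phi> (axis i 1)))"

text \<open>r^sharp: pairing (r^sharp a) b = <r, a (x) b> = sum R i j a_i b_j.\<close>
definition rsharp :: "('n::finite \<Rightarrow> 'n \<Rightarrow> 'k::field) \<Rightarrow> 'k^'n \<Rightarrow> 'k^'n" where
  "rsharp R a = (\<chi> j. \<Sum>i\<in>UNIV. R i j * a $ i)"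

definition skew_tensor :: "('n \<Rightarrow> 'n \<Rightarrow> 'k::field) \<Rightarrow> bool" where
  "skew_tensor R \<longleftrightarrow> (\<forall>i j. R i j = - R j i)"

text \<open>[r,r]_g with r = sum_{(i,j)} x_{ij} (x) y_{ij}, x_{ij} = R i j e_i, y_{ij} = e_j,
 as coefficient function of a 3-tensor (u (x) v (x) w has coefficients u_a v_b w_c).\<close>
definition hom_yb :: "('k::field^'n::finite \<Rightarrow> 'k^'n \<Rightarrow> 'k^'n) \<Rightarrow> ('k^'n \<Rightarrow> 'k^'n)
    \<Rightarrow> ('n \<Rightarrow> 'n \<Rightarrow> 'k) \<Rightarrow> 'n \<Rightarrow> 'n \<Rightarrow> 'n \<Rightarrow> 'k" where
  "hom_yb br \<phi> R a b c =
    (\<Sum>i\<in>UNIV. \<Sum>j\<in>UNIV. \<Sum>k\<in>UNIV. \<Sum>l\<in>UNIV.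
      (let xi = R i j *s axis i 1; yi = axis j (1::'k);
           xj = R k l *s axis k 1; yj = axis l (1::'k) in
        br xi xj $ a * \<phi> yi $ b * \<phi> yj $ c
      + \<phi> xi $ a * br yi xj $ b * \<phi> yj $ c
      + \<phi> xi $ a * \<phi> xj $ b * br yi yj $ c))"

end

theory Submission
  imports Defs
begin

(* Write T for the inverse of r\<^sup>\<sharp>, so that B(x,y) = \<langle>T x, y\<rangle>. As the pairing is
nondegenerate, \<phi> r\<^sup>\<sharp> = r\<^sup>\<sharp> \<phi>\<^sup>* holds iff \<phi> is self-adjoint for B. Under this condition the
coefficients of [r,r] are the values at basis covectors of the trilinear form hom_yb_form,
\<Theta>(\<alpha>,\<beta>,\<gamma>) = \<langle>\<alpha>, [\<phi> r\<^sup>\<sharp> \<beta>, \<phi> r\<^sup>\<sharp> \<gamma>]\<rangle> + cyclic, while self-adjointness and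
\<phi>[y,z] = [\<phi> y, \<phi> z] turn the cyclic sum of B(\<phi> x, [y,z]) into \<Theta>(T x, T y, T z). Since T is
bijective, both vanishing conditions say \<Theta> = 0. *)

lemma klinear_linear: "klinear f \<Longrightarrow> Vector_Spaces.linear (*s) (*s) f"
  unfolding Vector_Spaces.linear_iff klinear_def
  by (simp add: vec.vector_space_axioms)

lemma klinear_simps:
  assumes "klinear f"
  shows "f (x + y) = f x + f y" and "f (c *s x) = c *s f x"
  using assms by (simp_all add: klinear_def)

lemma klinear_sum: "klinear f \<Longrightarrow> f (sum g A) = (\<Sum>x\<in>A. f (g x))"
  using Vector_Spaces.linear.axioms(3)[OF klinear_linear] by (rule module_hom.sum)

lemma kbilinear_simps:
  assumes "kbilinear br"
  shows "br (x + y) z = br x z + br y z" and "br z (x + y) = br z x + br z y"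
    and "br (c *s x) y = c *s br x y" and "br x (c *s y) = c *s br x y"
    and "br (- x) y = - br x y" and "br x (- y) = - br x y"
  using assms unfolding kbilinear_def klinear_def by (metis vector_sneg_minus1)+

lemma pairing_axis_left: "pairing (axis i 1) x = x $ i"
  and pairing_axis_right: "pairing x (axis i 1) = x $ i"
  by (simp_all add: pairing_def axis_def if_distrib[where f="\<lambda>c. c * _"]
      if_distrib[where f="\<lambda>c. _ * c"] cong: if_cong)

lemma pairing_simps:
  "pairing (x + y) z = pairing x z + pairing y z"
  "pairing z (x + y) = pairing z x + pairing z y"
  "pairing (c *s x) y = c * pairing x y"
  "pairing x (c *s y) = c * pairing x y"
  by (simp_all add: pairing_def sum.distrib sum_distrib_left algebra_simps)

lemma pairing_eqI: "(\<And>y. pairing a y = pairing b y) \<Longrightarrow> a = b"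
  by (simp add: pairing_axis_right[symmetric] vec_eq_iff)

lemma pairing_dual_map:
  assumes "klinear \<phi>"
  shows "pairing (dual_map \<phi> a) x = pairing a (\<phi> x)"
proof -
  have "pairing (dual_map \<phi> a) x = (\<Sum>i\<in>UNIV. (\<Sum>j\<in>UNIV. a $ j * \<phi> (axis i 1) $ j) * x $ i)"
    by (simp add: pairing_def dual_map_def)
  also have "\<dots> = (\<Sum>i\<in>UNIV. \<Sum>j\<in>UNIV. a $ j * (x $ i * \<phi> (axis i 1) $ j))"
    by (simp add: sum_distrib_left sum_distrib_right mult_ac)
  also have "\<dots> = (\<Sum>j\<in>UNIV. a $ j * (\<Sum>i\<in>UNIV. x $ i * \<phi> (axis i 1) $ j))"
    by (subst sum.swap) (simp add: sum_distrib_left)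
  also have "\<dots> = pairing a (\<phi> x)"
    by (simp add: pairing_def linear_componentwise[OF klinear_linear[OF assms], of x])
  finally show ?thesis .
qed

lemma klinear_rsharp: "klinear (rsharp R)"
  unfolding klinear_def
  by (simp add: rsharp_def vec_eq_iff sum.distrib sum_distrib_left distrib_left mult.left_commute)

lemma linear_functional_eq_0_on_axes:
  fixes g :: "'k::field^'n::finite \<Rightarrow> 'k"
  assumes "Vector_Spaces.linear (*s) (*) g" and "\<And>i. g (axis i 1) = 0"
  shows "g x = 0"
proof -
  interpret g: Vector_Spaces.linear "(*s)" "(*)" g by fact
  have "x \<in> vec.span cart_basis" by simp
  then show ?thesis
    by (rule g.eq_0_on_span[rotated]) (auto simp: cart_basis_def assms(2))
qed

lemma kbilinear_sum_sum:
  assumes "kbilinear br"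
  shows "br (\<Sum>i\<in>I. \<Sum>j\<in>J. f i j) (\<Sum>k\<in>K. \<Sum>l\<in>L. g k l)
    = (\<Sum>i\<in>I. \<Sum>j\<in>J. \<Sum>k\<in>K. \<Sum>l\<in>L. br (f i j) (g k l))"
proof -
  have sum_left: "br (sum g A) y = (\<Sum>a\<in>A. br (g a) y)" for g A y
    using assms klinear_sum[of "\<lambda>x. br x y"] by (simp add: kbilinear_def)
  have sum_right: "br x (sum g A) = (\<Sum>a\<in>A. br x (g a))" for g A x
    using assms klinear_sum[of "br x"] by (simp add: kbilinear_def)
  show ?thesis
    unfolding sum_left by (simp only: sum_right)
qed

lemma dual_map_axis: "dual_map \<phi> (axis a 1) $ i = \<phi> (axis i 1) $ a"
  by (simp add: dual_map_def pairing_axis_left)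

lemma rsharp_eq_sum: "rsharp R a = (\<Sum>i\<in>UNIV. \<Sum>j\<in>UNIV. (R i j * a $ i) *s axis j 1)"
proof -
  have "(\<Sum>j\<in>UNIV. (R i j * a $ i) *s axis j 1) = (\<chi> j. R i j * a $ i)" for i
    using basis_expansion[of "\<chi> j. R i j * a $ i"] by simp
  then show ?thesis
    by (simp add: rsharp_def vec_eq_iff sum_component)
qed

lemma rsharp_skew_eq_sum:
  assumes "skew_tensor R"
  shows "rsharp R a = - (\<Sum>i\<in>UNIV. \<Sum>j\<in>UNIV. (R i j * a $ j) *s axis i 1)"
proof -
  have skew: "R j i * a $ j = - (R i j * a $ j)" for i j
    using assms by (metis skew_tensor_def mult_minus_left)
  have "(\<Sum>i\<in>UNIV. \<Sum>j\<in>UNIV. (R i j * a $ j) *s axis i 1)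
      = (\<Sum>i\<in>UNIV. (\<Sum>j\<in>UNIV. R i j * a $ j) *s axis i 1)"
    by (simp add: vec.scale_sum_left)
  also have "\<dots> = (\<chi> i. \<Sum>j\<in>UNIV. R i j * a $ j)"
    using basis_expansion[of "\<chi> i. \<Sum>j\<in>UNIV. R i j * a $ j"] by simp
  moreover have "rsharp R a $ i = (\<Sum>j\<in>UNIV. - (R i j * a $ j))" for i
    unfolding rsharp_def vec_lambda_beta by (rule sum.cong[OF refl skew])
  ultimately show ?thesis
    by (simp add: vec_eq_iff sum_negf)
qed

lemma hom_yb_eq_brackets:
  fixes br :: "'k::field^'n::finite \<Rightarrow> 'k^'n \<Rightarrow> 'k^'n"
  assumes br: "kbilinear br" and \<phi>: "klinear \<phi>" and R: "skew_tensor R"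
  defines "s \<equiv> \<lambda>a. rsharp R (dual_map \<phi> (axis a 1))"
  shows "hom_yb br \<phi> R a b c = br (s b) (s c) $ a - br (s a) (s c) $ b + br (s a) (s b) $ c"
proof -
  let ?e = "\<lambda>i. axis i (1::'k)" and ?d = "\<lambda>a. dual_map \<phi> (axis a 1)"
  have "hom_yb br \<phi> R a b c =
      (\<Sum>i\<in>UNIV. \<Sum>j\<in>UNIV. \<Sum>k\<in>UNIV. \<Sum>l\<in>UNIV.
         br ((R i j * ?d b $ j) *s ?e i) ((R k l * ?d c $ l) *s ?e k)) $ a
    + (\<Sum>i\<in>UNIV. \<Sum>j\<in>UNIV. \<Sum>k\<in>UNIV. \<Sum>l\<in>UNIV.
         br ((R i j * ?d a $ i) *s ?e j) ((R k l * ?d c $ l) *s ?e k)) $ b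
    + (\<Sum>i\<in>UNIV. \<Sum>j\<in>UNIV. \<Sum>k\<in>UNIV. \<Sum>l\<in>UNIV.
         br ((R i j * ?d a $ i) *s ?e j) ((R k l * ?d b $ k) *s ?e l)) $ c"
    unfolding hom_yb_def Let_def sum_component sum.distrib[symmetric]
    by (intro sum.cong refl)
      (simp add: kbilinear_simps[OF br] klinear_simps[OF \<phi>] dual_map_axis mult_ac)
  also have "\<dots> = br (- s b) (- s c) $ a + br (s a) (- s c) $ b + br (s a) (s b) $ c"
  proof -
    have s: "(\<Sum>i\<in>UNIV. \<Sum>j\<in>UNIV. (R i j * ?d x $ i) *s ?e j) = s x" for x
      by (simp add: s_def rsharp_eq_sum)
    have s_skew: "(\<Sum>i\<in>UNIV. \<Sum>j\<in>UNIV. (R i j * ?d x $ j) *s ?e i) = - s x" for x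
      by (simp add: s_def rsharp_skew_eq_sum[OF R])
    show ?thesis
      unfolding kbilinear_sum_sum[OF br, symmetric] s s_skew ..
  qed
  finally show ?thesis
    by (simp add: kbilinear_simps[OF br])
qed

lemma hom_lie_algebraD:
  assumes "hom_lie_algebra br \<phi>"
  shows "kbilinear br" and "klinear \<phi>" and "br x y = - br y x"
    and "\<phi> (br x y) = br (\<phi> x) (\<phi> y)"
  using assms unfolding hom_lie_algebra_def by blast+

definition hom_yb_form ::
  "('k::field^'n::finite \<Rightarrow> 'k^'n \<Rightarrow> 'k^'n) \<Rightarrow> ('k^'n \<Rightarrow> 'k^'n) \<Rightarrow> ('n \<Rightarrow> 'n \<Rightarrow> 'k)
    \<Rightarrow> 'k^'n \<Rightarrow> 'k^'n \<Rightarrow> 'k^'n \<Rightarrow> 'k" where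
  "hom_yb_form br \<phi> R \<alpha> \<beta> \<gamma> =
     pairing \<alpha> (br (\<phi> (rsharp R \<beta>)) (\<phi> (rsharp R \<gamma>)))
   + pairing \<beta> (br (\<phi> (rsharp R \<gamma>)) (\<phi> (rsharp R \<alpha>)))
   + pairing \<gamma> (br (\<phi> (rsharp R \<alpha>)) (\<phi> (rsharp R \<beta>)))"

lemma hom_yb_eq_hom_yb_form:
  assumes "hom_lie_algebra br \<phi>" and "skew_tensor R"
    and "\<forall>a. \<phi> (rsharp R a) = rsharp R (dual_map \<phi> a)"
  shows "hom_yb br \<phi> R a b c = hom_yb_form br \<phi> R (axis a 1) (axis b 1) (axis c 1)"
proof -
  let ?s = "\<lambda>x. rsharp R (dual_map \<phi> (axis x 1))"
  have "br (?s c) (?s a) = - br (?s a) (?s c)"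
    using hom_lie_algebraD(3)[OF assms(1)] .
  then show ?thesis
    using hom_yb_eq_brackets[OF hom_lie_algebraD(1,2)[OF assms(1)] assms(2), of a b c] assms(3)
    by (simp add: hom_yb_form_def pairing_axis_left)
qed

lemma linear_hom_yb_form:
  assumes "kbilinear br" and "klinear \<phi>"
  shows "Vector_Spaces.linear (*s) (*) (\<lambda>\<alpha>. hom_yb_form br \<phi> R \<alpha> \<beta> \<gamma>)"
    and "Vector_Spaces.linear (*s) (*) (\<lambda>\<beta>. hom_yb_form br \<phi> R \<alpha> \<beta> \<gamma>)"
    and "Vector_Spaces.linear (*s) (*) (\<lambda>\<gamma>. hom_yb_form br \<phi> R \<alpha> \<beta> \<gamma>)"
  by (simp_all add: Vector_Spaces.linear_iff vec.vector_space_axioms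
      vector_space_over_itself.vector_space_axioms hom_yb_form_def pairing_simps
      klinear_simps[OF klinear_rsharp] klinear_simps[OF assms(2)] kbilinear_simps[OF assms(1)]
      ring_distribs)

lemma hom_yb_form_eq_0:
  assumes "kbilinear br" and "klinear \<phi>"
    and "\<And>a b c. hom_yb_form br \<phi> R (axis a 1) (axis b 1) (axis c 1) = 0"
  shows "hom_yb_form br \<phi> R \<alpha> \<beta> \<gamma> = 0"
proof -
  note linear = linear_hom_yb_form[OF assms(1,2)]
  have "hom_yb_form br \<phi> R \<alpha> (axis b 1) (axis c 1) = 0" for b c
    by (rule linear_functional_eq_0_on_axes[OF linear(1) assms(3)])
  then have "hom_yb_form br \<phi> R \<alpha> \<beta> (axis c 1) = 0" for c
    by (rule linear_functional_eq_0_on_axes[OF linear(2)])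
  then show ?thesis
    by (rule linear_functional_eq_0_on_axes[OF linear(3)])
qed

lemma rsharp_commute_iff_self_adjoint:
  assumes "klinear \<phi>" and bij: "bij (rsharp R)"
    and B: "\<And>x y. B x y = pairing (inv (rsharp R) x) y"
  shows "(\<forall>a. \<phi> (rsharp R a) = rsharp R (dual_map \<phi> a)) \<longleftrightarrow> (\<forall>x y. B (\<phi> x) y = B x (\<phi> y))"
proof -
  let ?T = "inv (rsharp R)"
  have "(\<forall>y. B (\<phi> x) y = B x (\<phi> y)) \<longleftrightarrow> \<phi> x = rsharp R (dual_map \<phi> (?T x))" for x
  proof -
    have "(\<forall>y. B (\<phi> x) y = B x (\<phi> y))
        \<longleftrightarrow> (\<forall>y. pairing (?T (\<phi> x)) y = pairing (dual_map \<phi> (?T x)) y)"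
      by (simp add: B pairing_dual_map[OF assms(1)])
    also have "\<dots> \<longleftrightarrow> ?T (\<phi> x) = dual_map \<phi> (?T x)"
      using pairing_eqI by auto
    finally show ?thesis
      by (metis bij bij_inv_eq_iff)
  qed
  then have "(\<forall>x y. B (\<phi> x) y = B x (\<phi> y)) \<longleftrightarrow> (\<forall>x. \<phi> x = rsharp R (dual_map \<phi> (?T x)))"
    by blast
  also have "\<dots> \<longleftrightarrow> (\<forall>a. \<phi> (rsharp R a) = rsharp R (dual_map \<phi> a))"
    by (metis bij bij_inv_eq_iff)
  finally show ?thesis ..
qed

lemma cyclic_sum_eq_hom_yb_form:
  assumes hl: "hom_lie_algebra br \<phi>" and bij: "bij (rsharp R)"
    and B: "\<And>x y. B x y = pairing (inv (rsharp R) x) y"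
    and self_adjoint: "\<forall>x y. B (\<phi> x) y = B x (\<phi> y)"
  shows "B (\<phi> x) (br y z) + B (\<phi> y) (br z x) + B (\<phi> z) (br x y)
    = hom_yb_form br \<phi> R (inv (rsharp R) x) (inv (rsharp R) y) (inv (rsharp R) z)"
proof -
  let ?T = "inv (rsharp R)"
  have "B (\<phi> u) (br v w) = pairing (?T u) (br (\<phi> (rsharp R (?T v))) (\<phi> (rsharp R (?T w))))" for u v w
  proof -
    have "B (\<phi> u) (br v w) = B u (br (\<phi> v) (\<phi> w))"
      using self_adjoint hom_lie_algebraD(4)[OF hl] by simp
    then show ?thesis
      by (simp add: B bij bij_is_surj surj_f_inv_f)
  qed
  then show ?thesis
    by (simp add: hom_yb_form_def)
qed

theorem proposition4p11:
  fixes br :: "'k::field^'n::finite \<Rightarrow> 'k^'n \<Rightarrow> 'k^'n"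
    and \<phi> :: "'k^'n \<Rightarrow> 'k^'n"
    and R :: "'n \<Rightarrow> 'n \<Rightarrow> 'k"
    and B :: "'k^'n \<Rightarrow> 'k^'n \<Rightarrow> 'k"
  assumes "hom_lie_algebra br \<phi>"
    and "weakly_involutive br \<phi>"
    and "skew_tensor R"
    and "bij (rsharp R)"
    and "\<And>x y. B x y = pairing (inv (rsharp R) x) y"
  shows "((\<forall>a. \<phi> (rsharp R a) = rsharp R (dual_map \<phi> a)) \<and> (\<forall>a b c. hom_yb br \<phi> R a b c = 0))
     \<longleftrightarrow> ((\<forall>x y z. B (\<phi> x) (br y z) + B (\<phi> y) (br z x) + B (\<phi> z) (br x y) = 0)
          \<and> (\<forall>x y. B (\<phi> x) y = B x (\<phi> y)))"
proof -
  note lin = hom_lie_algebraD(1,2)[OF assms(1)]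
  have "(\<forall>a b c. hom_yb br \<phi> R a b c = 0)
      \<longleftrightarrow> (\<forall>x y z. B (\<phi> x) (br y z) + B (\<phi> y) (br z x) + B (\<phi> z) (br x y) = 0)"
    if commute: "\<forall>a. \<phi> (rsharp R a) = rsharp R (dual_map \<phi> a)"
      and self_adjoint: "\<forall>x y. B (\<phi> x) y = B x (\<phi> y)"
  proof -
    have "(\<forall>a b c. hom_yb br \<phi> R a b c = 0) \<longleftrightarrow> (\<forall>\<alpha> \<beta> \<gamma>. hom_yb_form br \<phi> R \<alpha> \<beta> \<gamma> = 0)"
      using hom_yb_eq_hom_yb_form[OF assms(1,3) commute] hom_yb_form_eq_0[OF lin] by metis
    also have "\<dots> \<longleftrightarrow> (\<forall>x y z. B (\<phi> x) (br y z) + B (\<phi> y) (br z x) + B (\<phi> z) (br x y) = 0)"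
      unfolding cyclic_sum_eq_hom_yb_form[OF assms(1,4,5) self_adjoint]
      by (metis assms(4) bij_inv_eq_iff)
    finally show ?thesis .
  qed
  then show ?thesis
    using rsharp_commute_iff_self_adjoint[OF lin(2) assms(4,5)] by blast
qed

end
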